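(* Assume unit variances $\sigma_i=1$ for $i=1,\dots,p$, the linear model $X_a=X^a\theta^0_a+\epsilon_a$ with Gaussian noise as described, and that $S_0$ satisfies the $\Delta$-compatibility condition for some $\Delta>0$ with constant $\phi_{0,a}>0$. Let $$\lambda=\frac{4(t+\log p)}n,\qquad\mu=\frac4B\sqrt{\frac2n(t+\log p)},\qquad t\ge2n\Big(3+\frac{14}{\Delta}\Big)^2.$$ Then with probability at least $1-e^{-t}$, $$\frac1n\|X^a(\hat\theta^{\lambda,\mu}_a-\theta^0_a)\|_2^2+(\lambda-3B\mu)\|\hat\theta^{\lambda,\mu}_a-\theta^0_a\|_1\le\frac{s_0(2\lambda+B\mu)^2}{\phi_{0,a}^2}.$$
   Context: $X=(X_1,\dots,X_p)\sim N(0,\Sigma)$, $n$ i.i.d. observations. Fix a node $a$. $X_a\in\mathbb{R}^n$ is the observed $a$-th variable, $X^a$ the $n\times p$ observation matrix with $a$-th column set to zero, $\theta^0_a$ the true coefficient vector, and $\epsilon_a$ has i.i.d. $N(0,\sigma_{aa}-\Sigma_{ab}\Sigma_{bb}^{-1}\Sigma_{ab}')$ entries independent of $X^a$ (block notation with coordinate $a$ first). $S_0=\{j:\theta^0_{a,j}\neq0\}$, $s_0=|S_0|$. For $S\subseteq\{1,\dots,p\}$, $\theta_S$ has entries $\theta_j\mathbf{1}\{j\in S\}$ and $\theta_{S^c}$ entries $\theta_j\mathbf{1}\{j\notin S\}$. The local difference matrix $D^a$: from a known local neighborhood graph with edge set $E_{\rm local}$, $D$ has a row $e_i-e_j$ per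 edge $\{i,j\}$, $i<j$; $D^a$ keeps rows with $a$-th entry $0$. $B$ bounds the number of nonzero entries in any column of $D^a$. $\hat\theta^{\lambda,\mu}_a=\operatorname{argmin}_{\theta_a}\big[\frac1n\|X_a-X^a\theta_a\|_2^2+\lambda\|\theta_a\|_1+\mu\|D^a\theta_a\|_1\big]$. $\Delta$-compatibility condition: for all $\theta\in\mathbb{R}^p$ with $\|\theta_{S_0^c}\|_1\le(3+\Delta)\|\theta_{S_0}\|_1$ one has $\|\theta_{S_0}\|_1^2\le\frac{s_0\,\theta'X^{a\prime}X^a\theta}{n\phi_{0,a}^2}$. *)

theory Defs
  imports "HOL-Probability.Probability"
begin

text \<open>Indices are 0-based: variables j < p, observations i < n.
  A data set is a function X w i j (observation i, variable j).\<close>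

definition centered_normal_rv :: "'w measure \<Rightarrow> ('w \<Rightarrow> real) \<Rightarrow> real \<Rightarrow> bool" where
  "centered_normal_rv M Y v \<longleftrightarrow>
     Y \<in> borel_measurable M \<and>
     (if v = 0 then (AE w in M. Y w = 0)
      else v > 0 \<and> distributed M lborel Y (normal_density 0 (sqrt v)))"

text \<open>The n rows of X are i.i.d. N(0,Cov) p-vectors: equivalently the n*p array is jointly
  Gaussian, centred, with Cov(X i j, X i' k) = (if i = i' then Cov j k else 0).
  (Cramer--Wold characterisation of joint Gaussianity.)\<close>
definition iid_gaussian_rows ::
  "'w measure \<Rightarrow> nat \<Rightarrow> nat \<Rightarrow> (nat \<Rightarrow> nat \<Rightarrow> real) \<Rightarrow> ('w \<Rightarrow> nat \<Rightarrow> nat \<Rightarrow> real) \<Rightarrow> bool" where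
  "iid_gaussian_rows M n p Cov X \<longleftrightarrow>
     (\<forall>c :: nat \<Rightarrow> nat \<Rightarrow> real.
        centered_normal_rv M (\<lambda>w. \<Sum>i<n. \<Sum>j<p. c i j * X w i j)
          (\<Sum>i<n. \<Sum>j<p. \<Sum>k<p. c i j * c i k * Cov j k))"

text \<open>(X^a theta)_i : the a-th column of X set to zero.\<close>
definition Xa_mult :: "nat \<Rightarrow> nat \<Rightarrow> (nat \<Rightarrow> nat \<Rightarrow> real) \<Rightarrow> (nat \<Rightarrow> real) \<Rightarrow> nat \<Rightarrow> real" where
  "Xa_mult p a X \<theta> i = (\<Sum>j\<in>{..<p} - {a}. X i j * \<theta> j)"

definition l1norm :: "nat \<Rightarrow> (nat \<Rightarrow> real) \<Rightarrow> real" where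
  "l1norm p \<theta> = (\<Sum>j<p. \<bar>\<theta> j\<bar>)"

definition restrict_vec :: "nat set \<Rightarrow> (nat \<Rightarrow> real) \<Rightarrow> nat \<Rightarrow> real" where
  "restrict_vec S \<theta> j = (if j \<in> S then \<theta> j else 0)"

text \<open>Edges of the local neighbourhood graph are pairs (i,j) with i < j < p; the rows of D^a
  are the edges not containing a, so ||D^a theta||_1 is the sum below.\<close>
definition Da_edges :: "(nat \<times> nat) set \<Rightarrow> nat \<Rightarrow> (nat \<times> nat) set" where
  "Da_edges E a = {e \<in> E. fst e \<noteq> a \<and> snd e \<noteq> a}"

definition Da_l1 :: "(nat \<times> nat) set \<Rightarrow> nat \<Rightarrow> (nat \<Rightarrow> real) \<Rightarrow> real" where
  "Da_l1 E a \<theta> = (\<Sum>e\<in>Da_edges E a. \<bar>\<theta> (fst e) - \<theta> (snd e)\<bar>)"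

definition Da_col_nnz :: "(nat \<times> nat) set \<Rightarrow> nat \<Rightarrow> nat \<Rightarrow> nat" where
  "Da_col_nnz E a j = card {e \<in> Da_edges E a. fst e = j \<or> snd e = j}"

definition vectors :: "nat \<Rightarrow> (nat \<Rightarrow> real) set" where
  "vectors p = {\<theta>. \<forall>j\<ge>p. \<theta> j = 0}"

definition objective ::
  "nat \<Rightarrow> nat \<Rightarrow> nat \<Rightarrow> (nat \<times> nat) set \<Rightarrow> (nat \<Rightarrow> nat \<Rightarrow> real) \<Rightarrow> real \<Rightarrow> real \<Rightarrow> (nat \<Rightarrow> real) \<Rightarrow> real" where
  "objective n p a E X lam mu \<theta> =
     (1 / real n) * (\<Sum>i<n. (X i a - Xa_mult p a X \<theta> i)\<^sup>2)
     + lam * l1norm p \<theta> + mu * Da_l1 E a \<theta>"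

definition is_estimator ::
  "nat \<Rightarrow> nat \<Rightarrow> nat \<Rightarrow> (nat \<times> nat) set \<Rightarrow> (nat \<Rightarrow> nat \<Rightarrow> real) \<Rightarrow> real \<Rightarrow> real \<Rightarrow> (nat \<Rightarrow> real) \<Rightarrow> bool" where
  "is_estimator n p a E X lam mu \<theta> \<longleftrightarrow>
     \<theta> \<in> vectors p \<and> (\<forall>\<theta>'\<in>vectors p. objective n p a E X lam mu \<theta> \<le> objective n p a E X lam mu \<theta>')"

definition compatibility ::
  "nat \<Rightarrow> nat \<Rightarrow> nat \<Rightarrow> (nat \<Rightarrow> nat \<Rightarrow> real) \<Rightarrow> nat set \<Rightarrow> real \<Rightarrow> real \<Rightarrow> bool" where
  "compatibility n p a X S0 \<Delta> \<phi> \<longleftrightarrow>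
     (\<forall>\<theta>\<in>vectors p.
        l1norm p (restrict_vec (- S0) \<theta>) \<le> (3 + \<Delta>) * l1norm p (restrict_vec S0 \<theta>) \<longrightarrow>
        (l1norm p (restrict_vec S0 \<theta>))\<^sup>2
          \<le> real (card S0) * (\<Sum>i<n. (Xa_mult p a X \<theta> i)\<^sup>2) / (real n * \<phi>\<^sup>2))"

end

theory Submission
  imports Defs
begin

(* Deterministic part: minimality of the estimator gives the basic inequality; on the event
   that every correlation of the regression noise eps_a = X_a - X^a theta0 with a regressor X_j
   is at most n(lam + B mu)/4, the error d = theta - theta0 lies in the cone
   |d_{S0^c}|_1 <= (3 + Delta) |d_S0|_1, and the compatibility condition together with
   completing a square yields the oracle inequality (lemma oracle_inequality).

   Probabilistic part: eps +- X_j has i.i.d. centred normal entries with variance at most 2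
   (the residual is orthogonal to the regressors and all variances are 1).  A Chernoff bound
   for sums of squares of Gaussians (via the Hubbard--Stratonovich linearisation and Tonelli)
   and polarisation <eps, X_j> = (|eps + X_j|^2 - |eps - X_j|^2)/4 give the noise event with
   probability at least 1 - exp(-t) (lemma noise_event).  The theorem combines both parts after
   rewriting the tuning parameters as lam = 4u, B mu = 4v with u = v^2/2. *)

lemma l1norm_restrict_split:
  "l1norm p d = l1norm p (restrict_vec S d) + l1norm p (restrict_vec (- S) d)"
  unfolding l1norm_def restrict_vec_def
  by (simp add: sum.distrib[symmetric]) (intro sum.cong, auto)

(* If t0 vanishes off S, the decrease of the l1 norm from t0 to t is controlled by the
  error d = t - t0: it is at most |d_S|_1 - |d_{S^c}|_1 (triangle inequality on S, exactness off S). *)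
lemma l1norm_decrease:
  assumes "\<forall>j<p. j \<notin> S \<longrightarrow> t0 j = 0"
  shows "l1norm p t0 - l1norm p t
    \<le> l1norm p (restrict_vec S (\<lambda>j. t j - t0 j)) - l1norm p (restrict_vec (- S) (\<lambda>j. t j - t0 j))"
proof -
  have "l1norm p t0 - l1norm p t = (\<Sum>j<p. \<bar>t0 j\<bar> - \<bar>t j\<bar>)"
    unfolding l1norm_def by (simp add: sum_subtractf)
  also have "\<dots> \<le> (\<Sum>j<p. \<bar>restrict_vec S (\<lambda>j. t j - t0 j) j\<bar> - \<bar>restrict_vec (- S) (\<lambda>j. t j - t0 j) j\<bar>)"
    using assms by (intro sum_mono) (auto simp: restrict_vec_def)
  also have "\<dots> = l1norm p (restrict_vec S (\<lambda>j. t j - t0 j)) - l1norm p (restrict_vec (- S) (\<lambda>j. t j - t0 j))"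
    unfolding l1norm_def by (simp add: sum_subtractf)
  finally show ?thesis .
qed

lemma sum_edges_by_incidence:
  fixes f :: "nat \<Rightarrow> real"
  assumes F: "F \<subseteq> {(i, j). i < j \<and> j < p}"
  shows "(\<Sum>e\<in>F. f (fst e) + f (snd e)) = (\<Sum>j<p. f j * real (card {e\<in>F. fst e = j \<or> snd e = j}))"
proof -
  have "finite F"
    using F by (rule finite_subset) (auto intro: finite_subset[of _ "{..<p} \<times> {..<p}"])
  then have "(\<Sum>j<p. f j * real (card {e\<in>F. fst e = j \<or> snd e = j}))
      = (\<Sum>j<p. \<Sum>e\<in>F. if fst e = j \<or> snd e = j then f j else 0)"
    by (simp add: sum.inter_filter[symmetric] mult.commute)
  also have "\<dots> = (\<Sum>e\<in>F. \<Sum>j<p. if fst e = j \<or> snd e = j then f j else 0)"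
    by (rule sum.swap)
  also have "\<dots> = (\<Sum>e\<in>F. f (fst e) + f (snd e))"
  proof (rule sum.cong)
    fix e assume "e \<in> F"
    then have e: "fst e \<noteq> snd e" "fst e < p" "snd e < p" using F by auto
    have "(\<Sum>j<p. if fst e = j \<or> snd e = j then f j else 0)
        = (\<Sum>j<p. (if fst e = j then f j else 0) + (if snd e = j then f j else 0))"
      using e by (intro sum.cong) auto
    also have "\<dots> = f (fst e) + f (snd e)"
      using e by (simp add: sum.distrib)
    finally show "(\<Sum>j<p. if fst e = j \<or> snd e = j then f j else 0) = f (fst e) + f (snd e)" .
  qed simp
  finally show ?thesis ..
qed

lemma Da_l1_decrease:
  assumes "E \<subseteq> {(i, j). i < j \<and> j < p}" and "\<forall>j<p. real (Da_col_nnz E a j) \<le> B"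
  shows "Da_l1 E a t0 - Da_l1 E a t \<le> B * l1norm p (\<lambda>j. t j - t0 j)"
proof -
  let ?F = "Da_edges E a" and ?d = "\<lambda>j. t j - t0 j"
  have F: "?F \<subseteq> {(i, j). i < j \<and> j < p}" using assms(1) unfolding Da_edges_def by auto
  have "Da_l1 E a t0 - Da_l1 E a t = (\<Sum>e\<in>?F. \<bar>t0 (fst e) - t0 (snd e)\<bar> - \<bar>t (fst e) - t (snd e)\<bar>)"
    unfolding Da_l1_def by (simp add: sum_subtractf)
  also have "\<dots> \<le> (\<Sum>e\<in>?F. \<bar>?d (fst e)\<bar> + \<bar>?d (snd e)\<bar>)"
    by (intro sum_mono) linarith
  also have "\<dots> = (\<Sum>j<p. \<bar>?d j\<bar> * real (card {e\<in>?F. fst e = j \<or> snd e = j}))"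
    by (rule sum_edges_by_incidence[OF F])
  also have "\<dots> \<le> (\<Sum>j<p. \<bar>?d j\<bar> * B)"
    using assms(2) unfolding Da_col_nnz_def by (intro sum_mono mult_left_mono) auto
  also have "\<dots> = B * l1norm p ?d"
    unfolding l1norm_def by (simp add: sum_distrib_left mult.commute)
  finally show ?thesis .
qed

lemma basic_inequality:
  fixes X :: "nat \<Rightarrow> nat \<Rightarrow> real"
  assumes est: "is_estimator n p a E X lam mu t" and t0: "t0 \<in> vectors p"
  defines "ep \<equiv> \<lambda>i. X i a - Xa_mult p a X t0 i"
    and "z \<equiv> Xa_mult p a X (\<lambda>j. t j - t0 j)"
  shows "(1 / real n) * (\<Sum>i<n. (z i)\<^sup>2)
    \<le> (2 / real n) * (\<Sum>i<n. ep i * z i)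
       + lam * (l1norm p t0 - l1norm p t) + mu * (Da_l1 E a t0 - Da_l1 E a t)"
proof -
  have lin: "Xa_mult p a X t i = Xa_mult p a X t0 i + z i" for i
    unfolding z_def Xa_mult_def by (simp add: sum.distrib[symmetric] algebra_simps)
  have "objective n p a E X lam mu t \<le> objective n p a E X lam mu t0"
    using est t0 unfolding is_estimator_def by simp
  then have "(1 / real n) * (\<Sum>i<n. (ep i - z i)\<^sup>2) + lam * l1norm p t + mu * Da_l1 E a t
      \<le> (1 / real n) * (\<Sum>i<n. (ep i)\<^sup>2) + lam * l1norm p t0 + mu * Da_l1 E a t0"
    unfolding objective_def ep_def using lin by (simp add: algebra_simps)
  moreover have "(\<Sum>i<n. (ep i - z i)\<^sup>2)
      = (\<Sum>i<n. (ep i)\<^sup>2) - 2 * (\<Sum>i<n. ep i * z i) + (\<Sum>i<n. (z i)\<^sup>2)"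
    by (simp add: power2_diff sum.distrib sum_subtractf sum_distrib_left algebra_simps)
  ultimately show ?thesis
    by (simp add: algebra_simps add_divide_distrib diff_divide_distrib)
qed

lemma correlation_bound:
  fixes X :: "nat \<Rightarrow> nat \<Rightarrow> real"
  assumes "\<kappa> \<ge> 0" and "\<forall>j\<in>{..<p} - {a}. \<bar>\<Sum>i<n. ep i * X i j\<bar> \<le> \<kappa>"
  shows "\<bar>\<Sum>i<n. ep i * Xa_mult p a X d i\<bar> \<le> \<kappa> * l1norm p d"
proof -
  have "(\<Sum>i<n. ep i * Xa_mult p a X d i) = (\<Sum>j\<in>{..<p} - {a}. d j * (\<Sum>i<n. ep i * X i j))"
    unfolding Xa_mult_def
    by (simp add: sum_distrib_left sum_distrib_left[of "d _"] algebra_simps sum.swap[of _ "{..<n}"])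
  also have "\<bar>\<dots>\<bar> \<le> (\<Sum>j\<in>{..<p} - {a}. \<bar>d j\<bar> * \<kappa>)"
    using assms(2) by (intro order_trans[OF sum_abs] sum_mono) (auto simp: abs_mult intro: mult_left_mono)
  also have "\<dots> \<le> (\<Sum>j<p. \<bar>d j\<bar> * \<kappa>)"
    using assms(1) by (intro sum_mono2) auto
  also have "\<dots> = \<kappa> * l1norm p d"
    unfolding l1norm_def by (simp add: sum_distrib_left mult.commute)
  finally show ?thesis .
qed

(* Completing the square: 4 lam A <= A^2/K + 4 lam^2 K, combined with A^2 <= K y. *)
lemma completing_square_bound:
  fixes y A K lam :: real
  assumes "y \<ge> 0" and "K \<ge> 0" and "A\<^sup>2 \<le> K * y"
  shows "4 * lam * A - y \<le> 4 * lam\<^sup>2 * K"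
proof (cases "K = 0")
  case True
  then show ?thesis using assms by simp
next
  case False
  then have K: "K > 0" using assms(2) by simp
  have "K * (4 * lam * A) \<le> A\<^sup>2 + 4 * lam\<^sup>2 * K\<^sup>2"
    using sum_squares_ge_zero[of "A - 2 * lam * K" 0] by (simp add: power2_eq_square algebra_simps)
  also have "\<dots> \<le> K * (y + 4 * lam\<^sup>2 * K)"
    using assms(3) by (simp add: power2_eq_square algebra_simps)
  finally show ?thesis using K by simp
qed

lemma cone_from_basic_inequality:
  fixes y A R lam c \<Delta> :: real
  assumes "2 * y \<le> (3 * lam + 3 * c) * A - (lam - 3 * c) * R" and "y \<ge> 0" and "A \<ge> 0"
    and "lam > 3 * c" and "12 * c \<le> \<Delta> * (lam - 3 * c)"
  shows "R \<le> (3 + \<Delta>) * A"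
proof -
  have "(lam - 3 * c) * R \<le> (3 * lam + 3 * c) * A" using assms(1,2) by simp
  also have "\<dots> \<le> (lam - 3 * c) * ((3 + \<Delta>) * A)"
    using mult_right_mono[OF assms(5) assms(3)] by (simp add: algebra_simps)
  finally show ?thesis using assms(4) by simp
qed

lemma oracle_inequality:
  fixes X :: "nat \<Rightarrow> nat \<Rightarrow> real" and t0 t :: "nat \<Rightarrow> real"
  assumes n: "n \<ge> 1" and t0: "t0 \<in> vectors p"
    and Esub: "E \<subseteq> {(i, j). i < j \<and> j < p}" and nnz: "\<forall>j<p. real (Da_col_nnz E a j) \<le> B"
    and Bmu: "B * mu \<ge> 0" and mu: "mu \<ge> 0" and lam: "lam > 3 * (B * mu)"
    and cone: "12 * (B * mu) \<le> \<Delta> * (lam - 3 * (B * mu))"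
    and noise: "\<forall>j\<in>{..<p} - {a}.
      \<bar>\<Sum>i<n. (X i a - Xa_mult p a X t0 i) * X i j\<bar> \<le> real n * (lam + B * mu) / 4"
    and compat: "compatibility n p a X {j. j < p \<and> t0 j \<noteq> 0} \<Delta> \<phi>"
    and est: "is_estimator n p a E X lam mu t"
  shows "(1 / real n) * (\<Sum>i<n. (Xa_mult p a X (\<lambda>j. t j - t0 j) i)\<^sup>2)
      + (lam - 3 * B * mu) * l1norm p (\<lambda>j. t j - t0 j)
    \<le> real (card {j. j < p \<and> t0 j \<noteq> 0}) * (2 * lam + B * mu)\<^sup>2 / \<phi>\<^sup>2"
proof -
  define S where "S = {j. j < p \<and> t0 j \<noteq> 0}"
  define d where "d = (\<lambda>j. t j - t0 j)"
  define z where "z = Xa_mult p a X d"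
  define c where "c = B * mu"
  define y where "y = (1 / real n) * (\<Sum>i<n. (z i)\<^sup>2)"
  define A where "A = l1norm p (restrict_vec S d)"
  define R where "R = l1norm p (restrict_vec (- S) d)"
  define K where "K = real (card S) / \<phi>\<^sup>2"
  have npos: "real n > 0" using n by simp
  have nonneg: "y \<ge> 0" "A \<ge> 0" "K \<ge> 0" "c \<ge> 0"
    unfolding y_def A_def K_def c_def l1norm_def using Bmu by (simp_all add: sum_nonneg)
  have l1d: "l1norm p d = A + R" unfolding A_def R_def by (rule l1norm_restrict_split)
  have dv: "d \<in> vectors p"
    using est t0 unfolding is_estimator_def vectors_def d_def by simp
  have "\<bar>\<Sum>i<n. (X i a - Xa_mult p a X t0 i) * z i\<bar> \<le> real n * (lam + c) / 4 * l1norm p d"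
    unfolding z_def c_def using lam Bmu by (intro correlation_bound noise) simp
  then have noise_term: "(2 / real n) * (\<Sum>i<n. (X i a - Xa_mult p a X t0 i) * z i) \<le> (lam + c) / 2 * (A + R)"
    using npos l1d by (simp add: field_simps abs_le_iff)
  have "lam * (l1norm p t0 - l1norm p t) \<le> lam * (A - R)"
    using l1norm_decrease[of p S t0 t] lam Bmu unfolding A_def R_def d_def S_def
    by (intro mult_left_mono) auto
  moreover have "mu * (Da_l1 E a t0 - Da_l1 E a t) \<le> c * (A + R)"
    using mult_left_mono[OF Da_l1_decrease[OF Esub nnz, of t0 t] mu] l1d
    unfolding c_def d_def by (simp add: algebra_simps)
  ultimately have key: "2 * y \<le> (3 * lam + 3 * c) * A - (lam - 3 * c) * R"
    using basic_inequality[OF est t0] noise_term unfolding y_def z_def d_def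
    by (simp add: algebra_simps)
  (* the error lies in the cone, so the compatibility condition applies to it *)
  have "R \<le> (3 + \<Delta>) * A"
    using key nonneg lam cone unfolding c_def by (intro cone_from_basic_inequality) auto
  then have "A\<^sup>2 \<le> K * y"
    using compat dv unfolding compatibility_def A_def R_def y_def z_def S_def K_def
    by (auto simp: field_simps)
  then have "4 * lam * A - y \<le> 4 * lam\<^sup>2 * K"
    using nonneg by (intro completing_square_bound) auto
  also have "\<dots> \<le> (2 * lam + c)\<^sup>2 * K"
  proof -
    have "0 \<le> 4 * lam * c + c * c" using nonneg lam unfolding c_def by simp
    then show ?thesis
      using nonneg by (intro mult_right_mono) (simp_all add: power2_eq_square algebra_simps)
  qed
  finally have "y + (lam - 3 * c) * l1norm p d \<le> (2 * lam + c)\<^sup>2 * K"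
    using key l1d by (simp add: algebra_simps)
  then show ?thesis
    unfolding y_def z_def d_def c_def K_def S_def by (simp add: algebra_simps)
qed

(* Completing the square in the Gaussian exponent: tilting N(0,sigma^2) by exp(bx)
  gives a shifted normal density. *)
lemma normal_density_times_exp:
  assumes "\<sigma> > 0"
  shows "normal_density 0 \<sigma> x * exp (b * x) = exp (b\<^sup>2 * \<sigma>\<^sup>2 / 2) * normal_density (b * \<sigma>\<^sup>2) \<sigma> x"
proof -
  have "- (x - 0)\<^sup>2 / (2 * \<sigma>\<^sup>2) + b * x = b\<^sup>2 * \<sigma>\<^sup>2 / 2 + (- (x - b * \<sigma>\<^sup>2)\<^sup>2 / (2 * \<sigma>\<^sup>2))"
    using assms by (simp add: field_simps power2_eq_square)
  then have "exp (- (x - 0)\<^sup>2 / (2 * \<sigma>\<^sup>2)) * exp (b * x)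
      = exp (b\<^sup>2 * \<sigma>\<^sup>2 / 2) * exp (- (x - b * \<sigma>\<^sup>2)\<^sup>2 / (2 * \<sigma>\<^sup>2))"
    by (simp add: exp_add[symmetric])
  then show ?thesis unfolding normal_density_def by (simp add: algebra_simps)
qed

lemma normal_density_nn_integral:
  assumes "\<sigma> > 0"
  shows "(\<integral>\<^sup>+x. ennreal (normal_density m \<sigma> x) \<partial>lborel) = 1"
proof -
  have "(\<integral>\<^sup>+x. ennreal (normal_density m \<sigma> x) \<partial>lborel) = ennreal (\<integral>x. normal_density m \<sigma> x \<partial>lborel)"
    by (rule nn_integral_eq_integral) (auto intro: integrable_normal_density[OF assms])
  also have "\<dots> = 1" using integral_normal_moment_even[OF assms, of m 0] by simp
  finally show ?thesis .
qed

lemma normal_mgf: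
  assumes "\<sigma> > 0"
  shows "(\<integral>\<^sup>+x. ennreal (normal_density 0 \<sigma> x) * ennreal (exp (b * x)) \<partial>lborel)
    = ennreal (exp (b\<^sup>2 * \<sigma>\<^sup>2 / 2))"
proof -
  have "(\<integral>\<^sup>+x. ennreal (normal_density 0 \<sigma> x) * ennreal (exp (b * x)) \<partial>lborel)
      = (\<integral>\<^sup>+x. ennreal (exp (b\<^sup>2 * \<sigma>\<^sup>2 / 2)) * ennreal (normal_density (b * \<sigma>\<^sup>2) \<sigma> x) \<partial>lborel)"
    by (intro nn_integral_cong) (simp add: ennreal_mult[symmetric] normal_density_times_exp[OF assms])
  also have "\<dots> = ennreal (exp (b\<^sup>2 * \<sigma>\<^sup>2 / 2))
      * (\<integral>\<^sup>+x. ennreal (normal_density (b * \<sigma>\<^sup>2) \<sigma> x) \<partial>lborel)"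
    by (rule nn_integral_cmult) simp
  also have "\<dots> = ennreal (exp (b\<^sup>2 * \<sigma>\<^sup>2 / 2))"
    using normal_density_nn_integral[OF assms] by simp
  finally show ?thesis .
qed

definition std_normal :: "real measure" where
  "std_normal = density lborel (\<lambda>x. ennreal (normal_density 0 1 x))"

lemma prob_space_std_normal: "prob_space std_normal"
  unfolding std_normal_def by (rule prob_space_normal_density) simp

lemma sets_std_normal [simp, measurable_cong]: "sets std_normal = sets borel"
  unfolding std_normal_def by simp

lemma std_normal_nn_integral:
  assumes "f \<in> borel_measurable borel"
  shows "(\<integral>\<^sup>+x. f x \<partial>std_normal) = (\<integral>\<^sup>+x. ennreal (normal_density 0 1 x) * f x \<partial>lborel)"
  unfolding std_normal_def using assms by (subst nn_integral_density) auto

lemma hubbard_stratonovich: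
  assumes "s \<ge> 0"
  shows "ennreal (exp (s * z\<^sup>2)) = (\<integral>\<^sup>+g. ennreal (exp (sqrt (2 * s) * g * z)) \<partial>std_normal)"
proof -
  have "(\<integral>\<^sup>+g. ennreal (exp (sqrt (2 * s) * g * z)) \<partial>std_normal)
     = (\<integral>\<^sup>+g. ennreal (normal_density 0 1 g) * ennreal (exp ((sqrt (2 * s) * z) * g)) \<partial>lborel)"
    by (subst std_normal_nn_integral) (auto simp: mult_ac)
  also have "\<dots> = ennreal (exp ((sqrt (2 * s) * z)\<^sup>2 * 1\<^sup>2 / 2))" by (rule normal_mgf) simp
  also have "(sqrt (2 * s) * z)\<^sup>2 * 1\<^sup>2 / 2 = s * z\<^sup>2" using assms by (simp add: power_mult_distrib)
  finally show ?thesis ..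
qed

lemma hubbard_stratonovich_vector:
  fixes W :: "nat \<Rightarrow> real"
  assumes "s \<ge> 0"
  shows "ennreal (exp (s * (\<Sum>i<n. (W i)\<^sup>2)))
    = (\<integral>\<^sup>+G. ennreal (exp (\<Sum>i<n. sqrt (2 * s) * G i * W i)) \<partial>PiM {..<n} (\<lambda>_. std_normal))"
proof -
  interpret N: prob_space std_normal by (rule prob_space_std_normal)
  interpret PS: product_sigma_finite "\<lambda>_::nat. std_normal"
    by (simp add: product_sigma_finite_def N.sigma_finite_measure_axioms)
  have "ennreal (exp (s * (\<Sum>i<n. (W i)\<^sup>2))) = (\<Prod>i<n. ennreal (exp (s * (W i)\<^sup>2)))"
    by (simp add: sum_distrib_left exp_sum prod_ennreal)
  also have "\<dots> = (\<Prod>i<n. \<integral>\<^sup>+g. ennreal (exp (sqrt (2 * s) * g * W i)) \<partial>std_normal)"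
    using hubbard_stratonovich[OF assms] by simp
  also have "\<dots> = (\<integral>\<^sup>+G. (\<Prod>i<n. ennreal (exp (sqrt (2 * s) * G i * W i))) \<partial>PiM {..<n} (\<lambda>_. std_normal))"
    by (rule PS.product_nn_integral_prod[symmetric]) auto
  also have "\<dots> = (\<integral>\<^sup>+G. ennreal (exp (\<Sum>i<n. sqrt (2 * s) * G i * W i)) \<partial>PiM {..<n} (\<lambda>_. std_normal))"
    by (simp add: exp_sum prod_ennreal)
  finally show ?thesis .
qed

lemma chi_square_mgf:
  assumes "a < 1 / 2"
  shows "(\<integral>\<^sup>+g. ennreal (exp (a * g\<^sup>2)) \<partial>std_normal) = ennreal (1 / sqrt (1 - 2 * a))"
proof -
  define \<sigma> where "\<sigma> = 1 / sqrt (1 - 2 * a)"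
  have q: "1 - 2 * a > 0" using assms by simp
  have sp: "\<sigma> > 0" unfolding \<sigma>_def using q by simp
  have s2: "\<sigma>\<^sup>2 = 1 / (1 - 2 * a)" unfolding \<sigma>_def using q by (simp add: power_divide)
  have density: "normal_density 0 1 g * exp (a * g\<^sup>2) = \<sigma> * normal_density 0 \<sigma> g" for g
  proof -
    have e: "exp (- (g - 0)\<^sup>2 / (2 * 1\<^sup>2)) * exp (a * g\<^sup>2) = exp (- (g - 0)\<^sup>2 / (2 * \<sigma>\<^sup>2))"
      unfolding exp_add[symmetric] s2 using q by (simp add: field_simps)
    have r: "1 / sqrt (2 * pi * 1\<^sup>2) = \<sigma> * (1 / sqrt (2 * pi * \<sigma>\<^sup>2))"
      using sp by (simp add: real_sqrt_mult)
    show ?thesis unfolding normal_density_def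
      by (subst r) (simp only: mult.assoc e[symmetric])
  qed
  have "(\<integral>\<^sup>+g. ennreal (exp (a * g\<^sup>2)) \<partial>std_normal)
      = (\<integral>\<^sup>+g. ennreal (normal_density 0 1 g) * ennreal (exp (a * g\<^sup>2)) \<partial>lborel)"
    by (subst std_normal_nn_integral) auto
  also have "\<dots> = (\<integral>\<^sup>+g. ennreal \<sigma> * ennreal (normal_density 0 \<sigma> g) \<partial>lborel)"
    using sp by (intro nn_integral_cong) (simp add: ennreal_mult[symmetric] density)
  also have "\<dots> = ennreal \<sigma> * (\<integral>\<^sup>+g. ennreal (normal_density 0 \<sigma> g) \<partial>lborel)"
    by (rule nn_integral_cmult) simp
  also have "\<dots> = ennreal \<sigma>" using normal_density_nn_integral[OF sp] by simp
  finally show ?thesis unfolding \<sigma>_def .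
qed

lemma centered_normal_rv_nonneg: "centered_normal_rv M Y v \<Longrightarrow> v \<ge> 0"
  unfolding centered_normal_rv_def by (cases "v = 0") auto

lemma centered_normal_rv_measurable: "centered_normal_rv M Y v \<Longrightarrow> Y \<in> borel_measurable M"
  unfolding centered_normal_rv_def by simp

lemma centered_normal_rv_mgf:
  assumes "prob_space M" and "centered_normal_rv M Y v"
  shows "(\<integral>\<^sup>+w. ennreal (exp (Y w)) \<partial>M) = ennreal (exp (v / 2))"
proof (cases "v = 0")
  case True
  interpret prob_space M by fact
  have "AE w in M. Y w = 0" using assms(2) True unfolding centered_normal_rv_def by simp
  then have "(\<integral>\<^sup>+w. ennreal (exp (Y w)) \<partial>M) = (\<integral>\<^sup>+w. 1 \<partial>M)"
    by (intro nn_integral_cong_AE) auto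
  then show ?thesis using True by (simp add: emeasure_space_1)
next
  case False
  then have v: "v > 0" and d: "distributed M lborel Y (\<lambda>x. ennreal (normal_density 0 (sqrt v) x))"
    using assms(2) unfolding centered_normal_rv_def by auto
  have "(\<integral>\<^sup>+w. ennreal (exp (Y w)) \<partial>M)
      = (\<integral>\<^sup>+x. ennreal (normal_density 0 (sqrt v) x) * ennreal (exp (1 * x)) \<partial>lborel)"
    using distributed_nn_integral[OF d, of "\<lambda>x. ennreal (exp x)"] by simp
  also have "\<dots> = ennreal (exp (1\<^sup>2 * (sqrt v)\<^sup>2 / 2))" by (rule normal_mgf) (use v in simp)
  finally show ?thesis using v by simp
qed

(* Proof: linearise the square with auxiliary
  Gaussians G, swap the integrals (Tonelli), use the normal MGF in w and the chi-square MGF in G. *)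
lemma quadratic_mgf_bound:
  fixes W :: "'w \<Rightarrow> nat \<Rightarrow> real"
  assumes M: "prob_space M" and meas[measurable]: "\<And>i. (\<lambda>w. W w i) \<in> borel_measurable M"
    and s: "s \<ge> 0" "2 * s * T < 1"
    and gauss: "\<And>g. \<exists>v. centered_normal_rv M (\<lambda>w. \<Sum>i<n. g i * W w i) v \<and> v \<le> T * (\<Sum>i<n. (g i)\<^sup>2)"
  shows "(\<integral>\<^sup>+w. ennreal (exp (s * (\<Sum>i<n. (W w i)\<^sup>2))) \<partial>M) \<le> ennreal ((1 / sqrt (1 - 2 * s * T)) ^ n)"
proof -
  interpret M: prob_space M by fact
  interpret PS: product_sigma_finite "\<lambda>_::nat. std_normal"
    using prob_space_std_normal by (simp add: product_sigma_finite_def prob_space_imp_sigma_finite)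
  define P where "P = PiM {..<n} (\<lambda>_. std_normal)"
  interpret P: prob_space P unfolding P_def by (rule prob_space_PiM) (rule prob_space_std_normal)
  interpret PM: pair_sigma_finite P M ..
  define r where "r = sqrt (2 * s)"
  define F where "F = (\<lambda>G w. ennreal (exp (\<Sum>i<n. r * G i * W w i)))"
  have measF: "(\<lambda>(G, w). F G w) \<in> borel_measurable (P \<Otimes>\<^sub>M M)"
    unfolding F_def P_def by measurable
  (* for fixed Gaussian weights G, the exponent is a centred normal variable *)
  have inner: "(\<integral>\<^sup>+w. F G w \<partial>M) \<le> (\<Prod>i<n. ennreal (exp (s * T * (G i)\<^sup>2)))" for G
  proof -
    obtain v where v: "centered_normal_rv M (\<lambda>w. \<Sum>i<n. (r * G i) * W w i) v"
        "v \<le> T * (\<Sum>i<n. (r * G i)\<^sup>2)"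
      using gauss[of "\<lambda>i. r * G i"] by blast
    have "T * (\<Sum>i<n. (r * G i)\<^sup>2) = 2 * (s * T * (\<Sum>i<n. (G i)\<^sup>2))"
      unfolding r_def using s(1) by (simp add: power_mult_distrib sum_distrib_left algebra_simps)
    then have "v / 2 \<le> s * T * (\<Sum>i<n. (G i)\<^sup>2)" using v(2) by linarith
    then have "ennreal (exp (v / 2)) \<le> ennreal (exp (s * T * (\<Sum>i<n. (G i)\<^sup>2)))"
      by (intro ennreal_leI) simp
    then show ?thesis
      unfolding F_def using centered_normal_rv_mgf[OF M v(1)]
      by (simp add: sum_distrib_left exp_sum prod_ennreal)
  qed
  have "(\<integral>\<^sup>+w. ennreal (exp (s * (\<Sum>i<n. (W w i)\<^sup>2))) \<partial>M) = (\<integral>\<^sup>+w. (\<integral>\<^sup>+G. F G w \<partial>P) \<partial>M)"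
    unfolding F_def P_def r_def by (simp add: hubbard_stratonovich_vector[OF s(1)])
  also have "\<dots> = (\<integral>\<^sup>+G. (\<integral>\<^sup>+w. F G w \<partial>M) \<partial>P)" by (rule PM.Fubini'[OF measF])
  also have "\<dots> \<le> (\<integral>\<^sup>+G. (\<Prod>i<n. ennreal (exp (s * T * (G i)\<^sup>2))) \<partial>P)"
    by (intro nn_integral_mono inner)
  also have "\<dots> = (\<Prod>i<n. \<integral>\<^sup>+g. ennreal (exp (s * T * g\<^sup>2)) \<partial>std_normal)"
    unfolding P_def by (rule PS.product_nn_integral_prod) auto
  also have "\<dots> = (\<Prod>i<n. ennreal (1 / sqrt (1 - 2 * (s * T))))"
    using chi_square_mgf[of "s * T"] s(2) by simp
  also have "\<dots> = ennreal ((1 / sqrt (1 - 2 * s * T)) ^ n)"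
    by (simp add: prod_ennreal mult.assoc) (rule ennreal_power, use s in simp)
  finally show ?thesis .
qed

lemma quadratic_tail_bound:
  fixes W :: "'w \<Rightarrow> nat \<Rightarrow> real"
  assumes M: "prob_space M" and meas[measurable]: "\<And>i. (\<lambda>w. W w i) \<in> borel_measurable M"
    and s: "s \<ge> 0" "2 * s * T < 1"
    and gauss: "\<And>g. \<exists>v. centered_normal_rv M (\<lambda>w. \<Sum>i<n. g i * W w i) v \<and> v \<le> T * (\<Sum>i<n. (g i)\<^sup>2)"
  shows "emeasure M {w\<in>space M. x \<le> (\<Sum>i<n. (W w i)\<^sup>2)}
    \<le> ennreal ((1 / sqrt (1 - 2 * s * T)) ^ n * exp (- s * x))"
proof -
  let ?A = "{w\<in>space M. x \<le> (\<Sum>i<n. (W w i)\<^sup>2)}"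
  have "?A \<in> sets M" by measurable
  then have "emeasure M ?A = (\<integral>\<^sup>+w. indicator ?A w \<partial>M)" by simp
  also have "\<dots> \<le> (\<integral>\<^sup>+w. ennreal (exp (- s * x)) * ennreal (exp (s * (\<Sum>i<n. (W w i)\<^sup>2))) \<partial>M)"
  proof (intro nn_integral_mono)
    fix w
    show "indicator ?A w \<le> ennreal (exp (- s * x)) * ennreal (exp (s * (\<Sum>i<n. (W w i)\<^sup>2)))"
    proof (cases "w \<in> ?A")
      case True
      then have "s * x \<le> s * (\<Sum>i<n. (W w i)\<^sup>2)" using s(1) by (auto intro: mult_left_mono)
      then have "1 \<le> exp (- s * x) * exp (s * (\<Sum>i<n. (W w i)\<^sup>2))"
        by (simp add: exp_add[symmetric])
      then show ?thesis using True by (simp add: ennreal_mult[symmetric])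
    qed simp
  qed
  also have "\<dots> = ennreal (exp (- s * x)) * (\<integral>\<^sup>+w. ennreal (exp (s * (\<Sum>i<n. (W w i)\<^sup>2))) \<partial>M)"
    by (rule nn_integral_cmult) measurable
  also have "\<dots> \<le> ennreal (exp (- s * x)) * ennreal ((1 / sqrt (1 - 2 * s * T)) ^ n)"
    by (intro mult_left_mono quadratic_mgf_bound[OF M meas s gauss]) auto
  also have "\<dots> = ennreal ((1 / sqrt (1 - 2 * s * T)) ^ n * exp (- s * x))"
    by (simp add: ennreal_mult'[symmetric] mult.commute)
  finally show ?thesis .
qed

definition bform :: "nat \<Rightarrow> (nat \<Rightarrow> nat \<Rightarrow> real) \<Rightarrow> (nat \<Rightarrow> real) \<Rightarrow> (nat \<Rightarrow> real) \<Rightarrow> real" where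
  "bform p C u w = (\<Sum>x<p. \<Sum>y<p. u x * w y * C x y)"

(* The regression residual coefficients e_a - theta0: the noise of the nodewise regression is
  eps_i = sum_k residual k * X_ik. *)
definition residual :: "nat \<Rightarrow> (nat \<Rightarrow> real) \<Rightarrow> nat \<Rightarrow> real" where
  "residual a t0 k = (if k = a then 1 else 0) - t0 k"

lemma residual_mult: "residual a t0 k * z = (if k = a then z else 0) - t0 k * z"
  by (simp add: residual_def left_diff_distrib)

lemma residual_row:
  fixes X :: "nat \<Rightarrow> nat \<Rightarrow> real"
  assumes "a < p" and "t0 a = 0"
  shows "X i a - Xa_mult p a X t0 i = (\<Sum>k<p. residual a t0 k * X i k)"
proof -
  have "(\<Sum>k<p. t0 k * X i k) = t0 a * X i a + (\<Sum>k\<in>{..<p} - {a}. t0 k * X i k)"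
    using assms(1) by (simp add: sum.remove)
  then have "Xa_mult p a X t0 i = (\<Sum>k<p. t0 k * X i k)"
    unfolding Xa_mult_def using assms(2) by (simp add: mult.commute)
  then show ?thesis
    using assms(1) by (simp add: residual_mult sum_subtractf)
qed

lemma gaussian_rows_combination:
  assumes "iid_gaussian_rows M n p Cov X"
  shows "centered_normal_rv M (\<lambda>w. \<Sum>i<n. g i * (\<Sum>k<p. c k * X w i k))
           ((\<Sum>i<n. (g i)\<^sup>2) * bform p Cov c c)"
proof -
  have "centered_normal_rv M (\<lambda>w. \<Sum>i<n. \<Sum>k<p. (g i * c k) * X w i k)
          (\<Sum>i<n. \<Sum>j<p. \<Sum>k<p. (g i * c j) * (g i * c k) * Cov j k)"
    using assms[unfolded iid_gaussian_rows_def, rule_format, of "\<lambda>i k. g i * c k"] by simp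
  moreover have "(\<lambda>w. \<Sum>i<n. \<Sum>k<p. (g i * c k) * X w i k) = (\<lambda>w. \<Sum>i<n. g i * (\<Sum>k<p. c k * X w i k))"
    by (simp add: sum_distrib_left mult.assoc)
  moreover have "(\<Sum>i<n. \<Sum>j<p. \<Sum>k<p. (g i * c j) * (g i * c k) * Cov j k)
      = (\<Sum>i<n. (g i)\<^sup>2 * bform p Cov c c)"
    unfolding bform_def by (intro sum.cong refl) (simp add: sum_distrib_left power2_eq_square mult_ac)
  ultimately show ?thesis by (simp add: sum_distrib_right)
qed

lemma bform_nonneg:
  assumes "iid_gaussian_rows M n p Cov X" and "n \<ge> 1"
  shows "bform p Cov c c \<ge> 0"
proof -
  define g :: "nat \<Rightarrow> real" where "g = (\<lambda>i. if i = 0 then 1 else 0)"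
  have "(\<Sum>i<n. (g i)\<^sup>2) = (\<Sum>i<n. if i = 0 then 1 else 0)"
    by (intro sum.cong) (auto simp: g_def)
  also have "\<dots> = 1" using assms(2) by simp
  finally have "(\<Sum>i<n. (g i)\<^sup>2) = 1" .
  moreover have "(\<Sum>i<n. (g i)\<^sup>2) * bform p Cov c c \<ge> 0"
    by (rule centered_normal_rv_nonneg[OF gaussian_rows_combination[OF assms(1)]])
  ultimately show ?thesis by simp
qed

(* Throughout, theta0 (with theta0_a = 0) solves the population normal equations
  Cov_bb theta0 = Cov_ba of the regression of X_a on the other variables. *)
context
  fixes p a :: nat and C :: "nat \<Rightarrow> nat \<Rightarrow> real" and t0 :: "nat \<Rightarrow> real"
  assumes ap: "a < p" and sym: "\<forall>x<p. \<forall>y<p. C x y = C y x" and t0a: "t0 a = 0"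
    and normal_eq: "\<forall>y\<in>{..<p} - {a}. (\<Sum>x\<in>{..<p} - {a}. C y x * t0 x) = C y a"
begin

lemma regression_column:
  assumes "y < p" "y \<noteq> a"
  shows "(\<Sum>x<p. t0 x * C x y) = C a y"
proof -
  have "(\<Sum>x<p. t0 x * C x y) = t0 a * C a y + (\<Sum>x\<in>{..<p} - {a}. t0 x * C x y)"
    using ap by (simp add: sum.remove)
  also have "\<dots> = (\<Sum>x\<in>{..<p} - {a}. C y x * t0 x)"
    using t0a sym assms by (auto intro!: sum.cong)
  also have "\<dots> = C y a" using normal_eq assms by simp
  also have "\<dots> = C a y" using sym assms ap by simp
  finally show ?thesis .
qed

lemma residual_orthogonal:
  assumes "y < p" "y \<noteq> a"
  shows "(\<Sum>x<p. residual a t0 x * C x y) = 0"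
  using regression_column[OF assms] ap by (simp add: residual_mult sum_subtractf)

(* The residual variance is 1 - theta0^T Cov theta0, hence at most 1 under unit variances. *)
lemma residual_variance:
  assumes "C a a = 1" and "bform p C t0 t0 \<ge> 0"
  shows "bform p C (residual a t0) (residual a t0) \<le> 1"
proof -
  let ?r = "residual a t0"
  have swap: "bform p C u u = (\<Sum>y<p. u y * (\<Sum>x<p. u x * C x y))" for u
    unfolding bform_def by (subst sum.swap) (simp add: sum_distrib_left mult_ac)
  have "bform p C ?r ?r = (\<Sum>y<p. if y = a then (\<Sum>x<p. ?r x * C x a) else 0)"
    unfolding swap
  proof (intro sum.cong refl)
    fix y assume "y \<in> {..<p}"
    then show "?r y * (\<Sum>x<p. ?r x * C x y) = (if y = a then \<Sum>x<p. ?r x * C x a else 0)"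
      using residual_orthogonal[of y] t0a by (cases "y = a") (auto simp: residual_def)
  qed
  also have "\<dots> = 1 - (\<Sum>x<p. t0 x * C x a)"
    using ap assms(1) t0a by (simp add: residual_mult sum_subtractf)
  also have "(\<Sum>x<p. t0 x * C x a) = bform p C t0 t0"
    unfolding swap
  proof (intro sum.cong refl)
    fix y assume "y \<in> {..<p}"
    then show "t0 y * C y a = t0 y * (\<Sum>x<p. t0 x * C x y)"
      using regression_column[of y] sym ap t0a by (cases "y = a") auto
  qed
  finally show ?thesis using assms(2) by simp
qed

(* By orthogonality, eps +- X_j has variance Var(eps) + Var(X_j) <= 2. *)
lemma residual_plus_coordinate_variance:
  assumes "C a a = 1" and "C j j = 1" and "bform p C t0 t0 \<ge> 0"
    and "j < p" and "j \<noteq> a" and "\<sigma>\<^sup>2 = 1"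
  shows "bform p C (\<lambda>k. residual a t0 k + \<sigma> * (if k = j then 1 else 0))
                   (\<lambda>k. residual a t0 k + \<sigma> * (if k = j then 1 else 0)) \<le> 2"
proof -
  let ?r = "residual a t0" and ?e = "\<lambda>k. if k = j then 1 else (0::real)"
  have "bform p C (\<lambda>k. ?r k + \<sigma> * ?e k) (\<lambda>k. ?r k + \<sigma> * ?e k)
      = bform p C ?r ?r + \<sigma> * bform p C ?r ?e + \<sigma> * bform p C ?e ?r + \<sigma>\<^sup>2 * bform p C ?e ?e"
    unfolding bform_def by (simp add: algebra_simps sum.distrib sum_distrib_left power2_eq_square)
  moreover have "bform p C ?e ?e = 1"
  proof -
    have "bform p C ?e ?e = (\<Sum>x<p. if x = j then C j j else 0)"
      unfolding bform_def using assms(4)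
      by (intro sum.cong refl) (auto simp: if_distrib[of "\<lambda>u. u * _"] cong: if_cong)
    then show ?thesis using assms(2,4) by simp
  qed
  moreover have "bform p C ?r ?e = 0"
  proof -
    have "?r x * ?e y * C x y = (if y = j then ?r x * C x j else 0)" for x y
      by simp
    then show ?thesis
      using residual_orthogonal[OF assms(4,5)] assms(4) unfolding bform_def by simp
  qed
  moreover have "bform p C ?e ?r = 0"
  proof -
    have "(\<Sum>y<p. ?e x * ?r y * C x y) = (if x = j then \<Sum>y<p. ?r y * C j y else 0)" for x
      by simp
    then have "bform p C ?e ?r = (\<Sum>y<p. ?r y * C j y)"
      using assms(4) unfolding bform_def by simp
    also have "\<dots> = (\<Sum>y<p. ?r y * C y j)"
      using sym assms(4) by (intro sum.cong) auto
    finally show ?thesis using residual_orthogonal[OF assms(4,5)] by simp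
  qed
  ultimately show ?thesis
    using residual_variance[OF assms(1,3)] assms(6) by simp
qed

end

(* Tail of |eps +- X_j|^2 = sum_i (eps_i +- X_ij)^2: its rows are i.i.d. centred normal with
  variance at most 2, so the quadratic tail bound applies with T = 2. *)
lemma noise_correlation_tail:
  fixes X :: "'w \<Rightarrow> nat \<Rightarrow> nat \<Rightarrow> real" and x \<sigma> s :: real
  assumes M: "prob_space M" and n: "n \<ge> 1" and ap: "a < p"
    and iid: "iid_gaussian_rows M n p Cov X" and sym: "\<forall>j<p. \<forall>k<p. Cov j k = Cov k j"
    and unit_var: "\<forall>j<p. Cov j j = 1" and t0a: "\<theta>0 a = 0"
    and normal_eq: "\<forall>j\<in>{..<p} - {a}. (\<Sum>k\<in>{..<p} - {a}. Cov j k * \<theta>0 k) = Cov j a"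
    and j: "j < p" "j \<noteq> a" and \<sigma>: "\<sigma>\<^sup>2 = 1" and s: "s \<ge> 0" "4 * s < 1"
  defines "Bad \<equiv> {w \<in> space M. x \<le> (\<Sum>i<n. (X w i a - Xa_mult p a (X w) \<theta>0 i + \<sigma> * X w i j)\<^sup>2)}"
  shows "Bad \<in> sets M" and "emeasure M Bad \<le> ennreal ((1 / sqrt (1 - 4 * s)) ^ n * exp (- s * x))"
proof -
  define c where "c = (\<lambda>k. residual a \<theta>0 k + \<sigma> * (if k = j then 1 else 0))"
  define W where "W = (\<lambda>w i. if i < n then \<Sum>k<p. c k * X w i k else 0)"
  have row: "(\<Sum>k<p. c k * X w i k) = X w i a - Xa_mult p a (X w) \<theta>0 i + \<sigma> * X w i j" for w i
  proof -
    have "\<sigma> * (if k = j then 1 else 0) * z = (if k = j then \<sigma> * z else 0)" for k z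
      by simp
    then show ?thesis
      unfolding c_def residual_row[of a p \<theta>0 "X w", OF ap t0a] using j
      by (simp add: distrib_right sum.distrib)
  qed
  have var: "bform p Cov c c \<le> 2"
    unfolding c_def using unit_var ap j \<sigma>
    by (intro residual_plus_coordinate_variance[OF ap sym t0a normal_eq] bform_nonneg[OF iid n]) auto
  have gauss: "\<exists>v. centered_normal_rv M (\<lambda>w. \<Sum>i<n. g i * W w i) v \<and> v \<le> 2 * (\<Sum>i<n. (g i)\<^sup>2)" for g
  proof (intro exI conjI)
    show "centered_normal_rv M (\<lambda>w. \<Sum>i<n. g i * W w i) ((\<Sum>i<n. (g i)\<^sup>2) * bform p Cov c c)"
      using gaussian_rows_combination[OF iid, of g c] by (simp add: W_def)
    show "(\<Sum>i<n. (g i)\<^sup>2) * bform p Cov c c \<le> 2 * (\<Sum>i<n. (g i)\<^sup>2)"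
      using mult_left_mono[OF var, of "\<Sum>i<n. (g i)\<^sup>2"] by (simp add: sum_nonneg mult.commute)
  qed
  have meas: "(\<lambda>w. W w i) \<in> borel_measurable M" for i
  proof (cases "i < n")
    case True
    obtain v where "centered_normal_rv M (\<lambda>w. \<Sum>i'<n. (if i' = i then 1 else 0) * W w i') v"
      using gauss[of "\<lambda>i'. if i' = i then 1 else 0"] by blast
    moreover have "(\<lambda>w. \<Sum>i'<n. (if i' = i then 1 else 0) * W w i') = (\<lambda>w. W w i)"
      using True by (simp add: if_distrib[of "\<lambda>u. u * _"] cong: if_cong)
    ultimately show ?thesis by (metis centered_normal_rv_measurable)
  qed (simp add: W_def)
  have Bad_W: "Bad = {w \<in> space M. x \<le> (\<Sum>i<n. (W w i)\<^sup>2)}"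
    unfolding Bad_def W_def row by simp
  show "Bad \<in> sets M"
    unfolding Bad_W using meas by measurable
  show "emeasure M Bad \<le> ennreal ((1 / sqrt (1 - 4 * s)) ^ n * exp (- s * x))"
    using quadratic_tail_bound[OF M meas s(1) _ gauss, of x] s(2) unfolding Bad_W by simp
qed

lemma linear_le_exp:
  fixes v :: real
  assumes "v \<ge> 0"
  shows "2 * v \<le> exp (v / 2 + 1)"
proof -
  have "exp (v / 2) = (exp (v / 4))\<^sup>2" by (simp add: power2_eq_square exp_add[symmetric])
  also have "\<dots> \<ge> (1 + v / 4)\<^sup>2"
    using exp_ge_add_one_self[of "v / 4"] assms by (intro power_mono) auto
  finally have "exp (v / 2) \<ge> v"
    using sum_squares_ge_zero[of "1 - v / 4" 0] by (simp add: power2_eq_square algebra_simps)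
  moreover have "exp 1 \<ge> (2::real)" using exp_ge_add_one_self[of 1] by simp
  ultimately have "2 * v \<le> exp 1 * exp (v / 2)" using assms by (intro mult_mono) auto
  then show ?thesis by (simp add: exp_add mult.commute)
qed

(* The numeric core of the tail bound at the level x = 4n(u + v) with u = v^2/2. *)
lemma chi_square_tail_numeric:
  fixes u v :: real
  assumes v: "v \<ge> 6" and u: "u = v\<^sup>2 / 2"
  shows "2 * (sqrt u * exp (- (1 - 1 / u) * (u + v))) \<le> exp (- u)"
proof -
  have up: "u > 0" unfolding u using v by simp
  have "sqrt u \<le> sqrt (v\<^sup>2)" unfolding u using up by (intro real_sqrt_le_mono) simp
  then have su: "sqrt u \<le> v" using v by simp
  have "v / u = 2 / v" unfolding u using v by (simp add: field_simps power2_eq_square)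
  moreover have "2 / v \<le> 1 / 3" using v by (simp add: field_simps)
  ultimately have "v / 2 + 1 \<le> v - 1 - v / u"
    using v by linarith
  then have "exp (v / 2 + 1) \<le> exp (v - 1 - v / u)"
    by simp
  then have "2 * v \<le> exp (v - 1 - v / u)"
    using linear_le_exp[of v] v by linarith
  have "2 * (sqrt u * exp (- (1 - 1 / u) * (u + v))) \<le> 2 * v * exp (- (1 - 1 / u) * (u + v))"
    using mult_right_mono[OF su, of "exp (- (1 - 1 / u) * (u + v))"] by simp
  also have "\<dots> \<le> exp (v - 1 - v / u) * exp (- (1 - 1 / u) * (u + v))"
    using \<open>2 * v \<le> exp (v - 1 - v / u)\<close> by (intro mult_right_mono) auto
  also have "\<dots> = exp (- u)"
  proof -
    have "v - 1 - v / u + (- (1 - 1 / u) * (u + v)) = - u" using up by (simp add: field_simps)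
    then show ?thesis by (simp add: exp_add[symmetric])
  qed
  finally show ?thesis .
qed

lemma chi_square_tail_bound_numeric:
  fixes u v :: real
  assumes v: "v \<ge> 6" and u: "u = v\<^sup>2 / 2" and n: "n \<ge> 1"
  defines "s \<equiv> (1 - 1 / u) / 4"
  shows "s \<ge> 0" and "4 * s < 1"
    and "2 * ((1 / sqrt (1 - 4 * s)) ^ n * exp (- s * (4 * real n * (u + v)))) \<le> exp (- u * real n)"
proof -
  have u18: "u \<ge> 18" using power_mono[OF v, of 2] unfolding u by simp
  then show "s \<ge> 0" "4 * s < 1" unfolding s_def by (simp_all add: field_simps)
  define b where "b = sqrt u * exp (- (1 - 1 / u) * (u + v))"
  have "1 - 4 * s = 1 / u" unfolding s_def using u18 by (simp add: field_simps)
  then have "1 / sqrt (1 - 4 * s) = sqrt u" using u18 by (simp add: real_sqrt_divide)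
  moreover have "exp (- s * (4 * real n * (u + v))) = exp (- (1 - 1 / u) * (u + v)) ^ n"
  proof -
    have "- s * (4 * real n * (u + v)) = real n * (- (1 - 1 / u) * (u + v))"
      unfolding s_def by (simp add: field_simps)
    then show ?thesis by (simp add: exp_of_nat_mult)
  qed
  ultimately have "(1 / sqrt (1 - 4 * s)) ^ n * exp (- s * (4 * real n * (u + v))) = b ^ n"
    unfolding b_def by (simp add: power_mult_distrib)
  moreover have "2 * b ^ n \<le> (2 * b) ^ n"
  proof -
    have "(2::real) \<le> 2 ^ n" using n by (metis power_one_right power_increasing one_le_numeral)
    then show ?thesis unfolding power_mult_distrib b_def using u18 by (intro mult_right_mono) auto
  qed
  moreover have "(2 * b) ^ n \<le> exp (- u) ^ n"
    unfolding b_def using chi_square_tail_numeric[OF v u] u18 by (intro power_mono) auto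
  moreover have "exp (- u) ^ n = exp (- u * real n)"
    by (simp add: exp_of_nat_mult[symmetric] mult.commute)
  ultimately show "2 * ((1 / sqrt (1 - 4 * s)) ^ n * exp (- s * (4 * real n * (u + v)))) \<le> exp (- u * real n)"
    by simp
qed

(* Polarisation: <e,x> = (|e + x|^2 - |e - x|^2)/4, so two small squared norms bound the
  correlation. *)
lemma polarization_bound:
  fixes e x :: "nat \<Rightarrow> real"
  assumes "(\<Sum>i<n. (e i + x i)\<^sup>2) < c" and "(\<Sum>i<n. (e i - x i)\<^sup>2) < c"
  shows "\<bar>\<Sum>i<n. e i * x i\<bar> \<le> c / 4"
proof -
  have "4 * (\<Sum>i<n. e i * x i) = (\<Sum>i<n. (e i + x i)\<^sup>2) - (\<Sum>i<n. (e i - x i)\<^sup>2)"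
    by (simp add: sum_distrib_left sum_subtractf[symmetric] power2_eq_square algebra_simps)
  moreover have "(\<Sum>i<n. (e i + x i)\<^sup>2) \<ge> 0" "(\<Sum>i<n. (e i - x i)\<^sup>2) \<ge> 0"
    by (auto intro: sum_nonneg)
  ultimately show ?thesis using assms by linarith
qed

(* The probabilistic part: with probability at least 1 - p exp(-un) all noise correlations
  with the regressors are at most n(u + v) (union bound over j and the two signs). *)
lemma noise_event:
  fixes X :: "'w \<Rightarrow> nat \<Rightarrow> nat \<Rightarrow> real" and u v :: real
  assumes M: "prob_space M" and n: "n \<ge> 1" and ap: "a < p"
    and iid: "iid_gaussian_rows M n p Cov X" and sym: "\<forall>j<p. \<forall>k<p. Cov j k = Cov k j"
    and unit_var: "\<forall>j<p. Cov j j = 1" and t0a: "\<theta>0 a = 0"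
    and normal_eq: "\<forall>j\<in>{..<p} - {a}. (\<Sum>k\<in>{..<p} - {a}. Cov j k * \<theta>0 k) = Cov j a"
    and v: "v \<ge> 6" and u: "u = v\<^sup>2 / 2"
  shows "\<exists>A\<in>sets M. measure M A \<ge> 1 - real p * exp (- u * real n) \<and>
    (\<forall>w\<in>A. \<forall>j\<in>{..<p} - {a}.
       \<bar>\<Sum>i<n. (X w i a - Xa_mult p a (X w) \<theta>0 i) * X w i j\<bar> \<le> real n * (u + v))"
proof -
  interpret prob_space M by fact
  define s where "s = (1 - 1 / u) / 4"
  define x0 where "x0 = 4 * real n * (u + v)"
  define J where "J = {..<p} - {a}"
  define Bad where "Bad = (\<lambda>\<sigma> j. {w \<in> space M.
    x0 \<le> (\<Sum>i<n. (X w i a - Xa_mult p a (X w) \<theta>0 i + \<sigma> * X w i j)\<^sup>2)})"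
  note numeric = chi_square_tail_bound_numeric[OF v u n, folded s_def x0_def]
  have Bad: "Bad \<sigma> j \<in> sets M" "measure M (Bad \<sigma> j) \<le> exp (- u * real n) / 2"
    if "\<sigma>\<^sup>2 = 1" "j \<in> J" for \<sigma> j
  proof -
    note tail = noise_correlation_tail[OF M n ap iid sym unit_var t0a normal_eq _ _ that(1)
        numeric(1,2), of j x0]
    show "Bad \<sigma> j \<in> sets M" using tail that(2) unfolding J_def Bad_def by auto
    have "measure M (Bad \<sigma> j) \<le> (1 / sqrt (1 - 4 * s)) ^ n * exp (- s * x0)"
      using tail that(2) numeric(2) unfolding J_def Bad_def by (simp add: emeasure_eq_measure)
    then show "measure M (Bad \<sigma> j) \<le> exp (- u * real n) / 2" using numeric(3) by simp
  qed
  define U where "U = (\<Union>j\<in>J. Bad 1 j \<union> Bad (-1) j)"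
  have U: "U \<in> sets M" unfolding U_def J_def using Bad J_def by auto
  have "measure M U \<le> (\<Sum>j\<in>J. measure M (Bad 1 j \<union> Bad (-1) j))"
    unfolding U_def using Bad by (intro measure_UNION_le) (auto simp: J_def)
  also have "\<dots> \<le> (\<Sum>j\<in>J. exp (- u * real n))"
  proof (intro sum_mono)
    fix j assume "j \<in> J"
    then show "measure M (Bad 1 j \<union> Bad (-1) j) \<le> exp (- u * real n)"
      using measure_Un_le[of "Bad 1 j" M "Bad (-1) j"] Bad[of 1 j] Bad[of "-1" j] by simp
  qed
  also have "\<dots> = real (card J) * exp (- u * real n)" by simp
  also have "\<dots> \<le> real p * exp (- u * real n)"
    using card_mono[of "{..<p}" J] unfolding J_def by (intro mult_right_mono) auto
  finally have "measure M U \<le> real p * exp (- u * real n)" .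
  moreover have "\<bar>\<Sum>i<n. (X w i a - Xa_mult p a (X w) \<theta>0 i) * X w i j\<bar> \<le> real n * (u + v)"
    if "w \<in> space M - U" "j \<in> J" for w j
  proof -
    have "w \<in> space M" "w \<notin> Bad 1 j" "w \<notin> Bad (-1) j" using that unfolding U_def by auto
    then have "\<bar>\<Sum>i<n. (X w i a - Xa_mult p a (X w) \<theta>0 i) * X w i j\<bar> \<le> x0 / 4"
      by (intro polarization_bound) (auto simp: Bad_def)
    then show ?thesis unfolding x0_def by simp
  qed
  ultimately show ?thesis
    using U prob_compl[OF U] unfolding J_def by (intro bexI[of _ "space M - U"]) auto
qed

lemma tuning_parameters:
  fixes t lam mu B \<Delta> :: real
  assumes n: "n \<ge> 1" and p: "p \<ge> 1" and B: "B > 0" and \<Delta>: "\<Delta> > 0"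
    and lam: "lam = 4 * (t + ln (real p)) / real n"
    and mu: "mu = 4 / B * sqrt (2 / real n * (t + ln (real p)))"
    and t: "t \<ge> 2 * real n * (3 + 14 / \<Delta>)\<^sup>2"
  defines "u \<equiv> (t + ln (real p)) / real n"
  defines "v \<equiv> sqrt (2 * u)"
  shows "lam = 4 * u" and "B * mu = 4 * v" and "u = v\<^sup>2 / 2" and "v \<ge> 2 * (3 + 14 / \<Delta>)"
    and "exp (- t) = real p * exp (- u * real n)"
proof -
  have npos: "real n > 0" using n by simp
  have lnp: "ln (real p) \<ge> 0" using p by simp
  have "u \<ge> t / real n" unfolding u_def using lnp npos by (simp add: divide_right_mono)
  moreover have "t / real n \<ge> 2 * (3 + 14 / \<Delta>)\<^sup>2" using t npos by (simp add: field_simps)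
  moreover have "(2 * (3 + 14 / \<Delta>))\<^sup>2 = 2 * (2 * (3 + 14 / \<Delta>)\<^sup>2)"
    by (simp add: power2_eq_square algebra_simps)
  ultimately have u_ge: "2 * u \<ge> (2 * (3 + 14 / \<Delta>))\<^sup>2" by linarith
  show "lam = 4 * u" unfolding lam u_def by simp
  show "B * mu = 4 * v" unfolding mu v_def u_def using B by (simp add: field_simps)
  show "u = v\<^sup>2 / 2" unfolding v_def using order_trans[OF zero_le_power2 u_ge] by simp
  have "sqrt ((2 * (3 + 14 / \<Delta>))\<^sup>2) \<le> v" unfolding v_def using u_ge by (rule real_sqrt_le_mono)
  then show "v \<ge> 2 * (3 + 14 / \<Delta>)" using \<Delta> by simp
  have "- t = ln (real p) + (- u * real n)" unfolding u_def using npos by (simp add: field_simps)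
  then have "exp (- t) = exp (ln (real p)) * exp (- u * real n)" by (simp add: exp_add[symmetric])
  then show "exp (- t) = real p * exp (- u * real n)" using p by simp
qed

(* The lower bound on t makes lam dominate the fusion penalty B mu as required by the cone
  argument. *)
lemma tuning_conditions:
  fixes u v \<Delta> :: real
  assumes \<Delta>: "\<Delta> > 0" and v: "v \<ge> 2 * (3 + 14 / \<Delta>)" and u: "u = v\<^sup>2 / 2"
  shows "4 * u > 3 * (4 * v)" and "12 * (4 * v) \<le> \<Delta> * (4 * u - 3 * (4 * v))"
proof -
  have v6: "v > 6" using v \<Delta> by (smt (verit) divide_pos_pos)
  then show "4 * u > 3 * (4 * v)" unfolding u using mult_strict_right_mono[OF v6, of v]
    by (simp add: power2_eq_square)
  have "\<Delta> * (2 * v - 12) \<ge> \<Delta> * (56 / \<Delta>)"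
    using v \<Delta> by (intro mult_left_mono) (auto simp: field_simps)
  then have "\<Delta> * (2 * v - 12) \<ge> 56" using \<Delta> by simp
  then have "v * 48 \<le> v * (\<Delta> * (2 * v - 12))" using v6 by (intro mult_left_mono) auto
  then show "12 * (4 * v) \<le> \<Delta> * (4 * u - 3 * (4 * v))"
    unfolding u by (simp add: power2_eq_square algebra_simps)
qed

theorem mainTheorem14:
  fixes M :: "'w measure" and X :: "'w \<Rightarrow> nat \<Rightarrow> nat \<Rightarrow> real"
    and Cov :: "nat \<Rightarrow> nat \<Rightarrow> real" and \<theta>0 :: "nat \<Rightarrow> real"
    and n p a :: nat and E :: "(nat \<times> nat) set"
    and B \<Delta> \<phi> t lam mu :: real
  assumes "prob_space M"
    and "n \<ge> 1" and "a < p"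
    and "iid_gaussian_rows M n p Cov X"
    and "\<forall>j<p. \<forall>k<p. Cov j k = Cov k j"
    and unit_var: "\<forall>j<p. Cov j j = 1"
    and Cov_bb_inv: "\<forall>v. (\<forall>j\<in>{..<p} - {a}. (\<Sum>k\<in>{..<p} - {a}. Cov j k * v k) = 0)
                          \<longrightarrow> (\<forall>j\<in>{..<p} - {a}. v j = 0)"
    and theta0: "\<theta>0 \<in> vectors p" "\<theta>0 a = 0"
      "\<forall>j\<in>{..<p} - {a}. (\<Sum>k\<in>{..<p} - {a}. Cov j k * \<theta>0 k) = Cov j a"
    and "E \<subseteq> {(i, j). i < j \<and> j < p}"
    and "B > 0" and "\<forall>j<p. real (Da_col_nnz E a j) \<le> B"
    and "\<Delta> > 0" and "\<phi> > 0"
    and "lam = 4 * (t + ln (real p)) / real n"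
    and "mu = 4 / B * sqrt (2 / real n * (t + ln (real p)))"
    and "t \<ge> 2 * real n * (3 + 14 / \<Delta>)\<^sup>2"
  shows "\<exists>A \<in> sets M. measure M A \<ge> 1 - exp (- t) \<and>
    (\<forall>w\<in>A. compatibility n p a (X w) {j. j < p \<and> \<theta>0 j \<noteq> 0} \<Delta> \<phi> \<longrightarrow>
      (\<forall>\<theta>. is_estimator n p a E (X w) lam mu \<theta> \<longrightarrow>
         (1 / real n) * (\<Sum>i<n. (Xa_mult p a (X w) (\<lambda>j. \<theta> j - \<theta>0 j) i)\<^sup>2)
         + (lam - 3 * B * mu) * l1norm p (\<lambda>j. \<theta> j - \<theta>0 j)
         \<le> real (card {j. j < p \<and> \<theta>0 j \<noteq> 0}) * (2 * lam + B * mu)\<^sup>2 / \<phi>\<^sup>2))"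
proof -
  note model = assms(1-6) theta0(2,3)
  define u where "u = (t + ln (real p)) / real n"
  define v where "v = sqrt (2 * u)"
  have "p \<ge> 1" using assms(3) by simp
  note tuning = tuning_parameters[OF assms(2) this assms(12,14,16-18), folded u_def, folded v_def]
  have "2 * (3 + 14 / \<Delta>) \<ge> 6" using assms(14) by simp
  then have v6: "v \<ge> 6" using tuning(4) by linarith
  then obtain A where A: "A \<in> sets M" "measure M A \<ge> 1 - real p * exp (- u * real n)"
    and noise: "\<forall>w\<in>A. \<forall>j\<in>{..<p} - {a}.
      \<bar>\<Sum>i<n. (X w i a - Xa_mult p a (X w) \<theta>0 i) * X w i j\<bar> \<le> real n * (u + v)"
    using noise_event[OF model v6 tuning(3)] by blast
  note regularisation = tuning_conditions[OF assms(14) tuning(4,3), folded tuning(1,2)]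
  have "B * mu \<ge> 0" using tuning(2) v6 by simp
  then have "mu \<ge> 0" using assms(12) by (simp add: zero_le_mult_iff)
  show ?thesis
  proof (intro bexI[OF _ A(1)] conjI ballI impI allI)
    show "measure M A \<ge> 1 - exp (- t)" using A(2) tuning(5) by simp
  next
    fix w \<theta> assume "w \<in> A"
      and compat: "compatibility n p a (X w) {j. j < p \<and> \<theta>0 j \<noteq> 0} \<Delta> \<phi>"
      and est: "is_estimator n p a E (X w) lam mu \<theta>"
    have scale: "real n * (u + v) = real n * (lam + B * mu) / 4" using tuning(1,2) by simp
    have "\<forall>j\<in>{..<p} - {a}.
      \<bar>\<Sum>i<n. (X w i a - Xa_mult p a (X w) \<theta>0 i) * X w i j\<bar> \<le> real n * (lam + B * mu) / 4"
      using bspec[OF noise \<open>w \<in> A\<close>] unfolding scale .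
    then show "(1 / real n) * (\<Sum>i<n. (Xa_mult p a (X w) (\<lambda>j. \<theta> j - \<theta>0 j) i)\<^sup>2)
         + (lam - 3 * B * mu) * l1norm p (\<lambda>j. \<theta> j - \<theta>0 j)
         \<le> real (card {j. j < p \<and> \<theta>0 j \<noteq> 0}) * (2 * lam + B * mu)\<^sup>2 / \<phi>\<^sup>2"
      using regularisation \<open>B * mu \<ge> 0\<close> \<open>mu \<ge> 0\<close>
      by (intro oracle_inequality[OF assms(2) theta0(1) assms(11,13) _ _ _ _ _ compat est]) auto
  qed
qed

end
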